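(* Let $\rho$ be a density operator (positive, trace one, on a finite-dimensional or separable Hilbert space) with eigenvalues $\lambda_1\ge\lambda_2\ge\cdots$ listed in nonincreasing order with multiplicity, and for a positive integer $D$ let $\epsilon(D)=\sum_{i\ge D+1}\lambda_i$. Then for every $0<\alpha<1$, $$\epsilon(D)\le \exp\!\Big(\frac{1-\alpha}{\alpha}\Big(S^\alpha(\rho)-\log\frac{D}{1-\alpha}\Big)\Big),$$ i.e. $\log\epsilon(D)\le\frac{1-\alpha}{\alpha}\big(S^\alpha(\rho)-\log\frac{D}{1-\alpha}\big)$ whenever $\epsilon(D)>0$. *)

theory Defs
  imports Complex_Main
begin

text \<open>A density operator is represented by its spectrum: the sequence
  lam 0 \<ge> lam 1 \<ge> ... of its eigenvalues, listed in nonincreasing order with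
  multiplicity (padded with zeros in finite dimension), nonnegative and summing to 1.
  Indexing is 0-based: lam (i-1) is the paper's \<lambda>_i.\<close>

definition density_spectrum :: "(nat \<Rightarrow> real) \<Rightarrow> bool" where
  "density_spectrum lam \<longleftrightarrow> (\<forall>i. 0 \<le> lam i) \<and> decseq lam \<and> lam sums 1"

text \<open>Truncation error eps(D) = sum over i \<ge> D+1 of \<lambda>_i (1-based), i.e. lam (D), lam (D+1), ...\<close>
definition tail_mass :: "(nat \<Rightarrow> real) \<Rightarrow> nat \<Rightarrow> real" where
  "tail_mass lam D = (\<Sum>i. lam (i + D))"

definition renyi_entropy :: "real \<Rightarrow> (nat \<Rightarrow> real) \<Rightarrow> real" where
  "renyi_entropy \<alpha> lam = ln (\<Sum>i. lam i powr \<alpha>) / (1 - \<alpha>)"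

end

theory Submission
  imports Defs "HOL-Analysis.Convex"
begin

text \<open>
  Write \<open>L = \<lambda>\<^sub>D\<close> for the D-th largest eigenvalue and split the power sum
  \<open>T = tr \<rho>\<^sup>\<alpha> = \<Sum>\<^sub>i \<lambda>\<^sub>i\<^sup>\<alpha>\<close> into the head \<open>A = \<Sum>\<^sub>i\<^sub>\<le>\<^sub>D \<lambda>\<^sub>i\<^sup>\<alpha>\<close> and the tail
  \<open>B = \<Sum>\<^sub>i\<^sub>>\<^sub>D \<lambda>\<^sub>i\<^sup>\<alpha>\<close>.  Monotonicity of the spectrum gives
    (1) \<open>\<epsilon>(D) \<le> L\<^sup>1\<^sup>-\<^sup>\<alpha> B\<close>   (each tail eigenvalue is at most L), and
    (2) \<open>D L\<^sup>\<alpha> \<le> A\<close>        (each head eigenvalue is at least L).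
  Hence \<open>\<epsilon>\<^sup>\<alpha> \<le> (A/D)\<^sup>1\<^sup>-\<^sup>\<alpha> B\<^sup>\<alpha>\<close>, and the weighted AM-GM (Young) inequality
  \<open>A\<^sup>1\<^sup>-\<^sup>\<alpha> B\<^sup>\<alpha> \<le> (1-\<alpha>)\<^sup>1\<^sup>-\<^sup>\<alpha> (A + B)\<close> yields \<open>\<epsilon>\<^sup>\<alpha> \<le> ((1-\<alpha>)/D)\<^sup>1\<^sup>-\<^sup>\<alpha> T\<close>.
  Taking the power \<open>1/\<alpha>\<close> and using \<open>T = exp ((1-\<alpha>) S\<^sup>\<alpha>(\<rho>))\<close> gives the theorem.
\<close>

text \<open>Weighted AM-GM: the geometric mean with weights \<open>1-\<alpha>, \<alpha>\<close> is controlled by the sum,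
  with the constant \<open>(1-\<alpha>)\<^sup>1\<^sup>-\<^sup>\<alpha>\<close> (we drop the factor \<open>\<alpha>\<^sup>\<alpha> \<le> 1\<close>).\<close>
lemma weighted_geometric_mean_le_sum:
  fixes A B \<alpha> :: real
  assumes "0 \<le> A" "0 \<le> B" "0 < \<alpha>" "\<alpha> < 1"
  shows "A powr (1-\<alpha>) * B powr \<alpha> \<le> (1-\<alpha>) powr (1-\<alpha>) * (A + B)"
proof (cases "A = 0 \<or> B = 0")
  case True
  then show ?thesis using assms by auto
next
  case False
  then have "A > 0" "B > 0" using assms by auto
  have young: "(A/(1-\<alpha>)) powr (1-\<alpha>) * (B/\<alpha>) powr \<alpha> \<le> (1-\<alpha>)*(A/(1-\<alpha>)) + \<alpha>*(B/\<alpha>)"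
    by (rule Youngs_inequality_0) (use assms \<open>A > 0\<close> \<open>B > 0\<close> in auto)
  have "A powr (1-\<alpha>) * B powr \<alpha> = ((1-\<alpha>) powr (1-\<alpha>) * \<alpha> powr \<alpha>) *
      ((A/(1-\<alpha>)) powr (1-\<alpha>) * (B/\<alpha>) powr \<alpha>)"
    using assms \<open>A > 0\<close> \<open>B > 0\<close> by (simp add: powr_divide)
  also have "\<dots> \<le> ((1-\<alpha>) powr (1-\<alpha>) * \<alpha> powr \<alpha>) * (A + B)"
    using young assms by (intro mult_left_mono) auto
  also have "\<dots> \<le> ((1-\<alpha>) powr (1-\<alpha>) * 1) * (A + B)"
  proof -
    have "\<alpha> powr \<alpha> \<le> 1" using assms powr_mono2[of \<alpha> \<alpha> 1] by simp
    then show ?thesis using \<open>A > 0\<close> \<open>B > 0\<close> by (intro mult_right_mono mult_left_mono) auto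
  qed
  finally show ?thesis by simp
qed

text \<open>A number below the threshold \<open>L\<close> is bounded by \<open>L\<^sup>1\<^sup>-\<^sup>\<alpha>\<close> times its \<open>\<alpha>\<close>-th power;
  this converts the tail mass into a tail of the power sum.\<close>
lemma le_threshold_powr_interpolation:
  fixes x L \<alpha> :: real
  assumes "0 \<le> x" "x \<le> L" "\<alpha> \<le> 1"
  shows "x \<le> L powr (1-\<alpha>) * x powr \<alpha>"
proof (cases "x = 0")
  case True
  then show ?thesis by simp
next
  case False
  then have "x > 0" using assms by simp
  have "x = x powr (1-\<alpha>) * x powr \<alpha>"
    using \<open>x > 0\<close> by (simp add: powr_add[symmetric])
  also have "\<dots> \<le> L powr (1-\<alpha>) * x powr \<alpha>"
    using assms \<open>x > 0\<close> by (intro mult_right_mono powr_mono2) auto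
  finally show ?thesis .
qed

lemma tail_mass_nonneg:
  assumes "density_spectrum lam"
  shows "0 \<le> tail_mass lam D"
  using assms unfolding density_spectrum_def tail_mass_def
  by (intro suminf_nonneg summable_ignore_initial_segment) (auto simp: sums_iff)

lemma tail_mass_le_tail_power_sum:
  fixes lam :: "nat \<Rightarrow> real"
  assumes "density_spectrum lam" "\<alpha> \<le> 1"
    and "summable (\<lambda>i. lam i powr \<alpha>)"
  shows "tail_mass lam D \<le> lam (D - 1) powr (1-\<alpha>) * (\<Sum>i. lam (i + D) powr \<alpha>)"
proof -
  have nonneg: "\<And>i. 0 \<le> lam i" and "decseq lam" and "summable lam"
    using assms(1) unfolding density_spectrum_def by (auto simp: sums_iff)
  have below: "lam (i + D) \<le> lam (D - 1)" for i
    using \<open>decseq lam\<close> by (simp add: decseq_def)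
  have "tail_mass lam D \<le> (\<Sum>i. lam (D - 1) powr (1-\<alpha>) * lam (i + D) powr \<alpha>)"
    unfolding tail_mass_def
  proof (rule suminf_le)
    show "lam (i + D) \<le> lam (D - 1) powr (1-\<alpha>) * lam (i + D) powr \<alpha>" for i
      using le_threshold_powr_interpolation[OF nonneg below assms(2)] .
  qed (use \<open>summable lam\<close> assms(3) in
        \<open>auto intro: summable_mult summable_ignore_initial_segment\<close>)
  also have "\<dots> = lam (D - 1) powr (1-\<alpha>) * (\<Sum>i. lam (i + D) powr \<alpha>)"
    using assms(3) by (intro suminf_mult summable_ignore_initial_segment)
  finally show ?thesis .
qed

lemma head_power_sum_lower_bound:
  fixes lam :: "nat \<Rightarrow> real"
  assumes "density_spectrum lam" "0 \<le> \<alpha>"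
  shows "real D * lam (D - 1) powr \<alpha> \<le> (\<Sum>i<D. lam i powr \<alpha>)"
proof -
  have "of_nat (card {..<D}) * lam (D - 1) powr \<alpha> \<le> (\<Sum>i<D. lam i powr \<alpha>)"
  proof (rule sum_bounded_below)
    fix i assume "i \<in> {..<D}"
    then have "lam (D - 1) \<le> lam i"
      using assms(1) unfolding density_spectrum_def by (simp add: decseq_def)
    then show "lam (D - 1) powr \<alpha> \<le> lam i powr \<alpha>"
      using assms unfolding density_spectrum_def by (intro powr_mono2) auto
  qed
  then show ?thesis by simp
qed

lemma tail_mass_powr_le_power_sum:
  fixes lam :: "nat \<Rightarrow> real"
  assumes "density_spectrum lam" "D \<ge> 1" "0 < \<alpha>" "\<alpha> < 1"
    and summ: "summable (\<lambda>i. lam i powr \<alpha>)"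
  shows "tail_mass lam D powr \<alpha> \<le> (\<Sum>i. lam i powr \<alpha>) * ((1-\<alpha>) / real D) powr (1-\<alpha>)"
proof -
  define L where "L = lam (D - 1)"
  define A where "A = (\<Sum>i<D. lam i powr \<alpha>)"
  define B where "B = (\<Sum>i. lam (i + D) powr \<alpha>)"
  have nonneg: "\<And>i. 0 \<le> lam i"
    using assms(1) unfolding density_spectrum_def by auto
  have "0 \<le> L" "0 \<le> A" using nonneg by (auto simp: L_def A_def intro: sum_nonneg)
  have "0 \<le> B" unfolding B_def
    using summ by (intro suminf_nonneg summable_ignore_initial_segment) auto
  have "real D > 0" using assms(2) by simp
  have split: "(\<Sum>i. lam i powr \<alpha>) = A + B"
    unfolding A_def B_def using suminf_split_initial_segment[OF summ, of D] by simp
  have head: "L powr \<alpha> \<le> A / real D"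
    using head_power_sum_lower_bound[OF assms(1), of \<alpha> D] assms(3) \<open>real D > 0\<close>
    by (simp add: L_def A_def field_simps)
  have "tail_mass lam D powr \<alpha> \<le> (L powr (1-\<alpha>) * B) powr \<alpha>"
    using tail_mass_le_tail_power_sum[OF assms(1) _ summ] tail_mass_nonneg[OF assms(1)] assms(3,4)
    by (intro powr_mono2) (auto simp: L_def B_def)
  also have "\<dots> = (L powr \<alpha>) powr (1-\<alpha>) * B powr \<alpha>"
    using \<open>0 \<le> L\<close> \<open>0 \<le> B\<close> by (simp add: powr_mult powr_powr mult.commute)
  also have "\<dots> \<le> (A / real D) powr (1-\<alpha>) * B powr \<alpha>"
    using head assms(4) by (intro mult_right_mono powr_mono2) auto
  also have "\<dots> = (A powr (1-\<alpha>) * B powr \<alpha>) / real D powr (1-\<alpha>)"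
    using \<open>0 \<le> A\<close> \<open>real D > 0\<close> by (simp add: powr_divide)
  also have "\<dots> \<le> ((1-\<alpha>) powr (1-\<alpha>) * (A + B)) / real D powr (1-\<alpha>)"
    using weighted_geometric_mean_le_sum[OF \<open>0 \<le> A\<close> \<open>0 \<le> B\<close> assms(3,4)]
    by (intro divide_right_mono) auto
  also have "\<dots> = (\<Sum>i. lam i powr \<alpha>) * ((1-\<alpha>) / real D) powr (1-\<alpha>)"
    using split assms(4) \<open>real D > 0\<close> by (simp add: powr_divide)
  finally show ?thesis .
qed

lemma power_sum_pos:
  fixes lam :: "nat \<Rightarrow> real"
  assumes "density_spectrum lam" "summable (\<lambda>i. lam i powr \<alpha>)"
  shows "0 < (\<Sum>i. lam i powr \<alpha>)"
proof -
  have "lam sums 1" using assms(1) by (simp add: density_spectrum_def)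
  have "\<exists>i. lam i \<noteq> 0"
  proof (rule ccontr)
    assume "\<not> (\<exists>i. lam i \<noteq> 0)"
    then have "lam sums 0" by (simp add: sums_0)
    then show False using \<open>lam sums 1\<close> sums_unique2 by force
  qed
  then obtain i where "lam i \<noteq> 0" by blast
  then show ?thesis
    using assms(2) by (intro suminf_pos2[of _ i]) auto
qed

text \<open>The right-hand side of the theorem is the \<open>1/\<alpha>\<close>-th power of the bound on
  \<open>\<epsilon>(D)\<^sup>\<alpha>\<close>, since \<open>exp ((1-\<alpha>) S\<^sup>\<alpha>) = tr \<rho>\<^sup>\<alpha>\<close>.\<close>
lemma renyi_bound_as_power:
  fixes T D \<alpha> :: real
  assumes "0 < T" "0 < D" "0 < \<alpha>" "\<alpha> < 1"
  shows "exp ((1 - \<alpha>) / \<alpha> * (ln T / (1 - \<alpha>) - ln (D / (1 - \<alpha>))))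
       = (T * ((1 - \<alpha>) / D) powr (1 - \<alpha>)) powr (1 / \<alpha>)"
proof -
  define X where "X = T * ((1 - \<alpha>) / D) powr (1 - \<alpha>)"
  have "0 < X" unfolding X_def using assms by simp
  have "ln X = ln T - (1 - \<alpha>) * ln (D / (1 - \<alpha>))"
    unfolding X_def using assms by (simp add: ln_mult ln_powr ln_div algebra_simps)
  have "(1 - \<alpha>) / \<alpha> * (ln T / (1 - \<alpha>) - ln (D / (1 - \<alpha>)))
      = (ln T - (1 - \<alpha>) * ln (D / (1 - \<alpha>))) / \<alpha>"
    using assms by (simp add: field_simps)
  also have "\<dots> = ln X / \<alpha>"
    using \<open>ln X = _\<close> by simp
  finally have "exp ((1 - \<alpha>) / \<alpha> * (ln T / (1 - \<alpha>) - ln (D / (1 - \<alpha>)))) = exp (ln X / \<alpha>)"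
    by (rule arg_cong)
  also have "\<dots> = X powr (1 / \<alpha>)"
    using \<open>0 < X\<close> by (simp add: powr_def)
  finally show ?thesis unfolding X_def .
qed

theorem lemma2:
  fixes lam :: "nat \<Rightarrow> real" and D :: nat and \<alpha> :: real
  assumes "density_spectrum lam"
    and "D \<ge> 1"
    and "0 < \<alpha>" and "\<alpha> < 1"
    and "summable (\<lambda>i. lam i powr \<alpha>)"
  shows "tail_mass lam D \<le> exp ((1 - \<alpha>) / \<alpha> * (renyi_entropy \<alpha> lam - ln (real D / (1 - \<alpha>))))"
proof -
  define T where "T = (\<Sum>i. lam i powr \<alpha>)"
  define bound where "bound = T * ((1 - \<alpha>) / real D) powr (1 - \<alpha>)"
  have "tail_mass lam D = (tail_mass lam D powr \<alpha>) powr (1 / \<alpha>)"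
    using tail_mass_nonneg[OF assms(1)] assms(3) by (simp add: powr_powr)
  also have "\<dots> \<le> bound powr (1 / \<alpha>)"
    using tail_mass_powr_le_power_sum[OF assms] assms(3)
    by (intro powr_mono2) (auto simp: T_def bound_def)
  also have "\<dots> = exp ((1 - \<alpha>) / \<alpha> * (renyi_entropy \<alpha> lam - ln (real D / (1 - \<alpha>))))"
    using renyi_bound_as_power[of T "real D" \<alpha>] power_sum_pos[OF assms(1,5)] assms(2-4)
    by (simp add: T_def bound_def renyi_entropy_def)
  finally show ?thesis .
qed

end
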